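(* Let $m$ be a positive integer, $T=\{1,2\}^m$, and $d$ an integer with $4\le d\le m/2$. Then for every $r\in T$, the number of vectors $s\in T\setminus\{r\}$ with $d_{\mathrm{ERP}}(r,s)\le d$ is less than $\big(\frac{3em}{d}\big)^{2d}$.
   Context: Edit Distance with Real Penalty (ERP): for finite real sequences $r,s$ (possibly of different lengths), let $m'$ be the length of the longer one. A gap insertion inserts a zero-valued coordinate at any position. For $p\ge m'$ let $R_p$ (resp. $S_p$) be the set of length-$p$ sequences obtainable from $r$ (resp. $s$) by gap insertions. Then $d_{\mathrm{ERP}}(r,s)=\min_{p\ge m',\ \tilde r\in R_p,\ \tilde s\in S_p}\|\tilde r-\tilde s\|_1$. *)

theory Defs
  imports Complex_Main
begin

inductive gap_ins :: "real list \<Rightarrow> real list \<Rightarrow> bool" where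
  refl: "gap_ins r r"
| insert: "gap_ins r x \<Longrightarrow> i \<le> length x \<Longrightarrow> gap_ins r (take i x @ 0 # drop i x)"

definition l1_dist :: "real list \<Rightarrow> real list \<Rightarrow> real" where
  "l1_dist x y = (\<Sum>(a, b) \<leftarrow> zip x y. \<bar>a - b\<bar>)"

text \<open>Edit Distance with Real Penalty (the minimum is attained, so Inf = min).\<close>
definition d_erp :: "real list \<Rightarrow> real list \<Rightarrow> real" where
  "d_erp r s = Inf {l1_dist x y | p x y.
      p \<ge> max (length r) (length s) \<and> length x = p \<and> length y = p
      \<and> gap_ins r x \<and> gap_ins s y}"

definition T_set :: "nat \<Rightarrow> real list set" where
  "T_set m = {s. length s = m \<and> set s \<subseteq> {1, 2}}"

end

theory Submission
  imports Defs
begin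

text \<open>
  An optimal ERP alignment of two sequences over the alphabet \<open>{1,2}\<close> pairs letters with letters
  or with gaps (\<open>0\<close>), and every unequal pair costs at least \<open>1\<close>. Reading the alignment column
  by column therefore turns it into an edit script against \<open>r\<close> (keep, delete, substitute,
  insert \<open>1\<close>, insert \<open>2\<close>) of length at most \<open>m + d\<close> with at most \<open>d\<close> non-keep steps, and \<open>s\<close>
  is recovered from \<open>r\<close> and the script. Such scripts of length \<open>N\<close> number at most
  \<open>(1/y)\<^sup>d (1 + 4y)\<^sup>N\<close> for every \<open>0 < y \<le> 1\<close>; taking \<open>y = d/N\<close> gives \<open>(N e\<^sup>4/d)\<^sup>d\<close>, and
  \<open>N = m + d \<le> 3m/2\<close> makes this smaller than \<open>(3em/d)\<^sup>2\<^sup>d\<close>.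
\<close>

abbreviation nonzeros :: "real list \<Rightarrow> real list" where
  "nonzeros \<equiv> filter (\<lambda>a. a \<noteq> 0)"

lemma gap_ins_nonzeros: "gap_ins r x \<Longrightarrow> nonzeros x = nonzeros r"
proof (induction rule: gap_ins.induct)
  case (insert r x i)
  have "nonzeros (take i x @ 0 # drop i x) = nonzeros (take i x @ drop i x)"
    unfolding filter_append by simp
  then show ?case using insert.IH by simp
qed simp

lemma gap_ins_set: "gap_ins r x \<Longrightarrow> set x \<subseteq> insert 0 (set r)"
proof (induction rule: gap_ins.induct)
  case (insert r x i)
  then show ?case using set_take_subset[of i x] set_drop_subset[of i x] by auto
qed auto

lemma d_erp_less_imp_alignment:
  assumes "length r = length s" and "d_erp r s < c"
  obtains x y where "length x = length y" "gap_ins r x" "gap_ins s y" "l1_dist x y < c"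
proof -
  let ?X = "{l1_dist x y | p x y. p \<ge> max (length r) (length s) \<and> length x = p
      \<and> length y = p \<and> gap_ins r x \<and> gap_ins s y}"
  have "l1_dist r s \<in> ?X"
    using assms(1)
    by (intro CollectI exI[of _ "length r"] exI[of _ r] exI[of _ s]) (simp add: gap_ins.refl)
  then have "?X \<noteq> {}" by blast
  moreover have "Inf ?X < c"
    using assms(2) by (simp add: d_erp_def)
  ultimately obtain v where "v \<in> ?X" "v < c"
    by (rule cInf_lessD[elim_format]) blast
  then show ?thesis
    by (elim CollectE exE conjE) (rule that; simp)
qed

lemma length_mismatches_le_sum_abs:
  assumes "\<forall>(a, b) \<in> set l. a - b \<in> \<int>"
  shows "real (length (filter (\<lambda>(a, b). a \<noteq> b) l)) \<le> (\<Sum>(a, b) \<leftarrow> l. \<bar>a - b\<bar>)"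
  using assms
proof (induction l)
  case (Cons z l)
  obtain a b where z: "z = (a, b)" by fastforce
  have "a \<noteq> b \<Longrightarrow> 1 \<le> \<bar>a - b\<bar>"
    using Cons.prems z by (intro Ints_nonzero_abs_ge1) auto
  then show ?case using Cons z by auto
qed simp

datatype edit_step = Keep | Delete | Substitute | Insert1 | Insert2

text \<open>Over the alphabet \<open>{1,2}\<close> a substitution is determined by the letter it replaces.\<close>
fun apply_edits :: "real list \<Rightarrow> edit_step list \<Rightarrow> real list" where
  "apply_edits r [] = []"
| "apply_edits r (Insert1 # w) = 1 # apply_edits r w"
| "apply_edits r (Insert2 # w) = 2 # apply_edits r w"
| "apply_edits [] (t # w) = apply_edits [] w"
| "apply_edits (a # r) (Keep # w) = a # apply_edits r w"
| "apply_edits (a # r) (Delete # w) = apply_edits r w"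
| "apply_edits (a # r) (Substitute # w) = (3 - a) # apply_edits r w"

definition edit_scripts :: "nat \<Rightarrow> nat \<Rightarrow> edit_step list set" where
  "edit_scripts N d = {w. length w = N \<and> length (filter (\<lambda>t. t \<noteq> Keep) w) \<le> d}"

lemma finite_edit_scripts: "finite (edit_scripts N d)"
proof -
  have "(UNIV :: edit_step set) = {Keep, Delete, Substitute, Insert1, Insert2}"
    by (auto intro: edit_step.exhaust)
  then have "finite (UNIV :: edit_step set)"
    by (metis finite.emptyI finite_insert)
  then have "finite {w. set w \<subseteq> (UNIV :: edit_step set) \<and> length w = N}"
    by (rule finite_lists_length_eq)
  then show ?thesis
    by (rule rev_finite_subset) (auto simp: edit_scripts_def)
qed

lemma edit_scripts_0: "edit_scripts N 0 = {replicate N Keep}"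
  by (auto simp: edit_scripts_def filter_empty_conv intro: replicate_length_same[symmetric])

lemma card_edit_scripts_Suc_Suc:
  "card (edit_scripts (Suc N) (Suc e)) \<le> card (edit_scripts N (Suc e)) + 4 * card (edit_scripts N e)"
proof -
  let ?E = "{Delete, Substitute, Insert1, Insert2}"
  let ?A = "Cons Keep ` edit_scripts N (Suc e)"
  let ?B = "\<Union>t \<in> ?E. Cons t ` edit_scripts N e"
  have "edit_scripts (Suc N) (Suc e) \<subseteq> ?A \<union> ?B"
  proof
    fix w assume "w \<in> edit_scripts (Suc N) (Suc e)"
    then obtain t w' where "w = t # w'" "length w' = N"
      "length (filter (\<lambda>t. t \<noteq> Keep) (t # w')) \<le> Suc e"
      unfolding edit_scripts_def by (cases w) auto
    then show "w \<in> ?A \<union> ?B" unfolding edit_scripts_def by (cases t) auto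
  qed
  then have "card (edit_scripts (Suc N) (Suc e)) \<le> card (?A \<union> ?B)"
    by (intro card_mono) (auto simp: finite_edit_scripts)
  also have "\<dots> \<le> card ?A + card ?B"
    by (rule card_Un_le)
  also have "card ?B \<le> (\<Sum>t \<in> ?E. card (Cons t ` edit_scripts N e))"
    by (rule card_UN_le) simp
  also have "\<dots> = 4 * card (edit_scripts N e)"
    by (simp add: card_image)
  finally show ?thesis by (simp add: card_image)
qed

lemma card_edit_scripts_le:
  fixes y :: real
  assumes "0 < y" "y \<le> 1"
  shows "real (card (edit_scripts N d)) \<le> (1 / y) ^ d * (1 + 4 * y) ^ N"
proof (induction N arbitrary: d)
  case 0
  have "edit_scripts 0 d = {[]}" by (auto simp: edit_scripts_def)
  moreover have "1 \<le> (1 / y) ^ d" using assms by (intro one_le_power) simp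
  ultimately show ?case by simp
next
  case (Suc N)
  show ?case
  proof (cases d)
    case 0
    have "1 \<le> (1 + 4 * y) ^ Suc N" using assms by (intro one_le_power) simp
    then show ?thesis using 0 by (simp add: edit_scripts_0)
  next
    case (Suc e)
    have "real (card (edit_scripts (Suc N) d))
        \<le> real (card (edit_scripts N d)) + 4 * real (card (edit_scripts N e))"
      using card_edit_scripts_Suc_Suc[of N e] Suc by (simp flip: of_nat_add of_nat_mult)
    also have "\<dots> \<le> (1 / y) ^ d * (1 + 4 * y) ^ N + 4 * ((1 / y) ^ e * (1 + 4 * y) ^ N)"
      using Suc.IH[of d] Suc.IH[of e] by linarith
    also have "\<dots> = (1 / y) ^ d * (1 + 4 * y) ^ Suc N"
      using assms Suc by (simp add: field_simps)
    finally show ?thesis .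
  qed
qed

lemma card_edit_scripts_le_exp:
  assumes "0 < d" "d \<le> N"
  shows "real (card (edit_scripts N d)) \<le> (real N * exp 4 / real d) ^ d"
proof -
  define y where "y = real d / real N"
  have y: "0 < y" "y \<le> 1" using assms by (auto simp: y_def)
  have "real (card (edit_scripts N d)) \<le> (1 / y) ^ d * (1 + 4 * y) ^ N"
    using card_edit_scripts_le[OF y] .
  also have "\<dots> \<le> (1 / y) ^ d * exp (4 * y) ^ N"
    using y by (intro mult_left_mono power_mono) (simp_all add: add_pos_nonneg)
  also have "exp (4 * y) ^ N = exp 4 ^ d"
    using assms by (simp add: y_def flip: exp_of_nat_mult)
  also have "(1 / y) ^ d * exp 4 ^ d = (real N * exp 4 / real d) ^ d"
    by (simp add: y_def power_mult_distrib power_divide)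
  finally show ?thesis .
qed

definition edit_step_of :: "real \<Rightarrow> real \<Rightarrow> edit_step" where
  "edit_step_of a b = (if a = b then Keep else if a = 0 then (if b = 1 then Insert1 else Insert2)
     else if b = 0 then Delete else Substitute)"

fun edits_of_alignment :: "(real \<times> real) list \<Rightarrow> edit_step list" where
  "edits_of_alignment [] = []"
| "edits_of_alignment ((a, b) # l) = (if a = 0 \<and> b = 0 then edits_of_alignment l
     else edit_step_of a b # edits_of_alignment l)"

lemma apply_edits_replicate_Keep: "apply_edits [] (replicate n Keep) = []"
  by (induction n) auto

lemma apply_edits_edits_of_alignment:
  assumes "\<forall>(a, b) \<in> set l. a \<in> {0, 1, 2} \<and> b \<in> {0, 1, 2}"
  shows "apply_edits (nonzeros (map fst l)) (edits_of_alignment l @ w)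
    = nonzeros (map snd l) @ apply_edits [] w"
  using assms
proof (induction l)
  case (Cons z l)
  obtain a b where z: "z = (a, b)" by fastforce
  have "a \<in> {0, 1, 2}" "b \<in> {0, 1, 2}" using Cons.prems z by auto
  then consider "a = 0" "b = 0" | "a = b" "a \<noteq> 0" | "a = 0" "b = 1" | "a = 0" "b = 2"
    | "a \<noteq> 0" "b = 0" | "a = 1" "b = 2" | "a = 2" "b = 1"
    by auto
  moreover have "apply_edits (nonzeros (map fst l)) (edits_of_alignment l @ w)
      = nonzeros (map snd l) @ apply_edits [] w"
    using Cons by auto
  ultimately show ?case using z by cases (simp_all add: edit_step_of_def)
qed simp

lemma length_filter_edits_of_alignment:
  "length (filter (\<lambda>t. t \<noteq> Keep) (edits_of_alignment l)) = length (filter (\<lambda>(a, b). a \<noteq> b) l)"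
  by (induction l rule: edits_of_alignment.induct) (auto simp: edit_step_of_def)

lemma length_edits_of_alignment:
  "length (edits_of_alignment l)
    \<le> length (nonzeros (map fst l)) + length (filter (\<lambda>(a, b). a \<noteq> b) l)"
  by (induction l rule: edits_of_alignment.induct) auto

lemma alignment_imp_edit_script:
  assumes r: "set r \<subseteq> {1, 2}" and s: "set s \<subseteq> {1, 2}"
    and x: "gap_ins r x" and y: "gap_ins s y" and "length x = length y"
    and cost: "l1_dist x y < real d + 1"
  shows "\<exists>w \<in> edit_scripts (length r + d) d. apply_edits r w = s"
proof -
  let ?l = "zip x y"
  let ?mismatches = "length (filter (\<lambda>(a, b). a \<noteq> b) ?l)"
  have letters: "\<forall>(a, b) \<in> set ?l. a \<in> {0, 1, 2} \<and> b \<in> {0, 1, 2}"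
    using gap_ins_set[OF x] gap_ins_set[OF y] r s
    by (auto dest: set_zip_leftD set_zip_rightD)
  have "nonzeros (map fst ?l) = r"
    using gap_ins_nonzeros[OF x] r \<open>length x = length y\<close> by (auto intro: filter_True)
  moreover have "nonzeros (map snd ?l) = s"
    using gap_ins_nonzeros[OF y] s \<open>length x = length y\<close> by (auto intro: filter_True)
  moreover have "real ?mismatches < real d + 1"
    using length_mismatches_le_sum_abs[of ?l] letters cost
    unfolding l1_dist_def by fastforce
  then have "?mismatches \<le> d" by linarith
  ultimately have "length (edits_of_alignment ?l) \<le> length r + d"
    using length_edits_of_alignment[of ?l] by simp
  define w where "w = edits_of_alignment ?l @ replicate (length r + d - length (edits_of_alignment ?l)) Keep"
  have "w \<in> edit_scripts (length r + d) d"
    using \<open>length (edits_of_alignment ?l) \<le> _\<close> \<open>?mismatches \<le> d\<close>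
    by (simp add: w_def edit_scripts_def length_filter_edits_of_alignment)
  moreover have "apply_edits r w = s"
    using apply_edits_edits_of_alignment[OF letters] \<open>nonzeros (map fst ?l) = r\<close>
      \<open>nonzeros (map snd ?l) = s\<close> by (simp add: w_def apply_edits_replicate_Keep)
  ultimately show ?thesis by blast
qed

lemma finite_T_set: "finite (T_set m)"
  using finite_lists_length_eq[of "{1, 2 :: real}" m]
  by (rule rev_finite_subset) (auto simp: T_set_def)

lemma card_erp_ball_le_card_edit_scripts:
  assumes "r \<in> T_set m"
  shows "card {s \<in> T_set m. d_erp r s \<le> real d} \<le> card (edit_scripts (m + d) d)"
proof -
  have "{s \<in> T_set m. d_erp r s \<le> real d} \<subseteq> apply_edits r ` edit_scripts (m + d) d"
  proof
    fix s assume s: "s \<in> {s \<in> T_set m. d_erp r s \<le> real d}"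
    then have "length r = length s" "d_erp r s < real d + 1"
      using assms by (auto simp: T_set_def)
    then obtain x y where "length x = length y" "gap_ins r x" "gap_ins s y"
      "l1_dist x y < real d + 1"
      by (rule d_erp_less_imp_alignment)
    then show "s \<in> apply_edits r ` edit_scripts (m + d) d"
      using alignment_imp_edit_script[of r s] s assms by (fastforce simp: T_set_def)
  qed
  then show ?thesis
    by (meson card_image_le card_mono finite_edit_scripts finite_imageI order_trans)
qed

lemma exp4_bound_less_square:
  assumes "0 < d" "2 * d \<le> m"
  shows "real (m + d) * exp 4 / real d < (3 * exp 1 * real m / real d) ^ 2"
proof -
  have "0 \<le> (real m - 2 * real d) * (3 * real m + 2 * real d)"
    using assms(2) by (intro mult_nonneg_nonneg) simp_all
  then have md: "real (m + d) * real d \<le> 3 / 4 * real m ^ 2"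
    by (simp add: power2_eq_square algebra_simps)
  have e: "exp (1::real) ^ 2 \<le> 3 ^ 2"
    by (intro power_mono exp_le) simp
  have "real (m + d) * real d * exp 1 ^ 2 \<le> 3 / 4 * real m ^ 2 * 3 ^ 2"
    using mult_mono[OF md e] by simp
  also have "\<dots> < 9 * real m ^ 2"
    using assms by simp
  finally have key: "real (m + d) * real d * exp 1 ^ 2 < 9 * real m ^ 2" .
  have "real (m + d) * exp 4 / real d = real (m + d) * real d * exp 1 ^ 2 * (exp 1 ^ 2 / real d ^ 2)"
    using assms exp_of_nat_mult[of 4 "1 :: real"] by (simp add: field_simps power2_eq_square eval_nat_numeral)
  also have "\<dots> < 9 * real m ^ 2 * (exp 1 ^ 2 / real d ^ 2)"
    using key assms by (intro mult_strict_right_mono) auto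
  also have "\<dots> = (3 * exp 1 * real m / real d) ^ 2"
    by (simp add: power_divide power_mult_distrib)
  finally show ?thesis .
qed

theorem mainTheorem9:
  fixes m d :: nat and r :: "real list"
  assumes "m > 0" and "4 \<le> d" and "real d \<le> real m / 2" and "r \<in> T_set m"
  shows "real (card {s \<in> T_set m - {r}. d_erp r s \<le> real d})
           < (3 * exp 1 * real m / real d) ^ (2 * d)"
proof -
  have "0 < d" "2 * d \<le> m" using assms(2,3) by simp_all
  have "card {s \<in> T_set m - {r}. d_erp r s \<le> real d} \<le> card {s \<in> T_set m. d_erp r s \<le> real d}"
    by (intro card_mono) (auto simp: finite_T_set)
  also have "\<dots> \<le> card (edit_scripts (m + d) d)"
    using card_erp_ball_le_card_edit_scripts[OF assms(4)] .
  finally have "real (card {s \<in> T_set m - {r}. d_erp r s \<le> real d})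
      \<le> real (card (edit_scripts (m + d) d))" by simp
  also have "\<dots> \<le> (real (m + d) * exp 4 / real d) ^ d"
    using card_edit_scripts_le_exp[of d "m + d"] \<open>0 < d\<close> by simp
  also have "\<dots> < ((3 * exp 1 * real m / real d) ^ 2) ^ d"
    using exp4_bound_less_square[OF \<open>0 < d\<close> \<open>2 * d \<le> m\<close>] \<open>0 < d\<close>
    by (intro power_strict_mono) auto
  finally show ?thesis by (simp add: power_mult)
qed

end
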